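(* Let $n\ge 1$, $d=2^n$, and let $C=\mathcal{O}(1)$ be a constant. In the minus sign search problem, one is given vectors $x_1,\ldots,x_C\in\mathbb{C}^d$ such that for one unknown index $k^*\in\{1,\ldots,C\}$ we have $x_{k^*}=(-\tfrac{1}{\sqrt d},\tfrac{1}{\sqrt d},\ldots,\tfrac{1}{\sqrt d})$, while $x_i=(\tfrac{1}{\sqrt d},\ldots,\tfrac{1}{\sqrt d})$ for all $i\neq k^*$; the goal is to identify $k^*$. Any quantum algorithm that has access to copies of the $n$-qubit states $|x_1\rangle,\ldots,|x_C\rangle$ (where $|x\rangle=\sum_i x_i|i\rangle$) requires $\Omega(2^n)$ time to solve the minus sign search problem.
   Context: A quantum algorithm with quantum state inputs may request any number of copies of each state $|x_1\rangle,\ldots,|x_C\rangle$, each copy having unit cost, and may then perform arbitrary quantum operations and measurements; its running time is at least the total number of copies it uses. "Solving" the problem means outputting the correct index $k^*$ with probability at least $0.9$, for each possible value of $k^*$. *)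

theory Defs
  imports Complex_Main
begin

text \<open>Computational basis indices of one n-qubit register: {0..<d}, d = 2^n.
  Input states x_1..x_C are indexed by i in {1..C}; kstar is the hidden index.\<close>

definition input_state :: "nat \<Rightarrow> nat \<Rightarrow> nat \<Rightarrow> nat \<Rightarrow> complex" where
  "input_state d kstar i j =
     (if i = kstar \<and> j = 0 then - complex_of_real (1 / sqrt (real d))
      else complex_of_real (1 / sqrt (real d)))"

definition joint_basis :: "nat \<Rightarrow> nat \<Rightarrow> nat list set" where
  "joint_basis d m = {js. length js = m \<and> set js \<subseteq> {0..<d}}"

text \<open>Joint state: copy t (t < m) is a copy of the state with label s t.
  The amplitude of basis tuple js is the product of the individual amplitudes
  (tensor product).\<close>
definition joint_state ::
  "nat \<Rightarrow> nat \<Rightarrow> (nat \<Rightarrow> nat) \<Rightarrow> nat \<Rightarrow> nat list \<Rightarrow> complex" where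
  "joint_state d m s kstar js = (\<Prod>t<m. input_state d kstar (s t) (js ! t))"

definition qform :: "'a set \<Rightarrow> ('a \<Rightarrow> 'a \<Rightarrow> complex) \<Rightarrow> ('a \<Rightarrow> complex) \<Rightarrow> complex" where
  "qform I A v = (\<Sum>a\<in>I. \<Sum>b\<in>I. cnj (v a) * A a b * v b)"

definition psd_op :: "'a set \<Rightarrow> ('a \<Rightarrow> 'a \<Rightarrow> complex) \<Rightarrow> bool" where
  "psd_op I A \<longleftrightarrow> (\<forall>v. Im (qform I A v) = 0 \<and> Re (qform I A v) \<ge> 0)"

definition is_povm :: "'a set \<Rightarrow> 'o set \<Rightarrow> ('o \<Rightarrow> 'a \<Rightarrow> 'a \<Rightarrow> complex) \<Rightarrow> bool" where
  "is_povm I Outs E \<longleftrightarrow>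
     (\<forall>k\<in>Outs. psd_op I (E k)) \<and>
     (\<forall>a\<in>I. \<forall>b\<in>I. (\<Sum>k\<in>Outs. E k a b) = (if a = b then 1 else 0))"

definition outcome_prob ::
  "'a set \<Rightarrow> ('o \<Rightarrow> 'a \<Rightarrow> 'a \<Rightarrow> complex) \<Rightarrow> ('a \<Rightarrow> complex) \<Rightarrow> 'o \<Rightarrow> real" where
  "outcome_prob I E psi k = Re (qform I (E k) psi)"

text \<open>An algorithm using m copies in total (copy t being a copy of |x_{s t}>) followed by
  the most general measurement (a POVM with outcomes 1..C, the guessed index)
  solves minus sign search if it outputs kstar with probability >= 0.9 for every kstar.\<close>
definition solves_minus_sign_search ::
  "nat \<Rightarrow> nat \<Rightarrow> nat \<Rightarrow> (nat \<Rightarrow> nat) \<Rightarrow> (nat \<Rightarrow> nat list \<Rightarrow> nat list \<Rightarrow> complex) \<Rightarrow> bool" where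
  "solves_minus_sign_search C n m s E \<longleftrightarrow>
     (\<forall>t<m. s t \<in> {1..C}) \<and>
     is_povm (joint_basis (2^n) m) {1..C} E \<and>
     (\<forall>kstar\<in>{1..C}.
        outcome_prob (joint_basis (2^n) m) E (joint_state (2^n) m s kstar) kstar \<ge> 0.9)"

end

theory Submission
  imports Defs
begin

text \<open>Compare the inputs with hidden index 1 and with hidden index 2. The overlap of the m-copy
  product states is the product of the single-copy overlaps, each of which is 1 or 1 - 2/d;
  so it is at least (1 - 2/d)^m \<ge> 1 - 2m/d. On the other hand, positivity
  of the POVM elements forces the overlap of two unit vectors that a POVM maps to different
  outcomes with probability 0.9 each to be at most 3/5. Hence m \<ge> d/5.\<close>

lemma finite_joint_basis: "finite (joint_basis d m)"
  using finite_lists_length_eq[of "{0..<d}" m] unfolding joint_basis_def by (simp add: conj_commute)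

lemma joint_basis_Suc:
  "joint_basis d (Suc m) = (\<lambda>(j, js). j # js) ` ({0..<d} \<times> joint_basis d m)"
  unfolding joint_basis_def by (auto simp: length_Suc_conv image_iff)

lemma sum_prod_joint_basis:
  fixes f :: "nat \<Rightarrow> nat \<Rightarrow> 'a::comm_semiring_1"
  shows "(\<Sum>js\<in>joint_basis d m. \<Prod>t<m. f t (js ! t)) = (\<Prod>t<m. \<Sum>j\<in>{0..<d}. f t j)"
proof (induction m arbitrary: f)
  case 0
  have "joint_basis d 0 = {[]}"
    unfolding joint_basis_def by auto
  then show ?case by simp
next
  case (Suc m)
  have "(\<Sum>js\<in>joint_basis d (Suc m). \<Prod>t<Suc m. f t (js ! t))
      = (\<Sum>(j, js)\<in>{0..<d} \<times> joint_basis d m. \<Prod>t<Suc m. f t ((j # js) ! t))"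
    unfolding joint_basis_Suc by (simp add: sum.reindex inj_on_def case_prod_unfold)
  also have "\<dots> = (\<Sum>j\<in>{0..<d}. f 0 j * (\<Sum>js\<in>joint_basis d m. \<Prod>t<m. f (Suc t) (js ! t)))"
    by (simp only: sum.cartesian_product[symmetric] prod.lessThan_Suc_shift nth_Cons_0 nth_Cons_Suc
        sum_distrib_left)
  also have "\<dots> = (\<Prod>t<Suc m. \<Sum>j\<in>{0..<d}. f t j)"
    by (simp only: Suc.IH[of "\<lambda>t. f (Suc t)"] prod.lessThan_Suc_shift sum_distrib_right)
  finally show ?case .
qed

definition sesq_form ::
  "'a set \<Rightarrow> ('a \<Rightarrow> 'a \<Rightarrow> complex) \<Rightarrow> ('a \<Rightarrow> complex) \<Rightarrow> ('a \<Rightarrow> complex) \<Rightarrow> complex" where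
  "sesq_form I A v w = (\<Sum>a\<in>I. \<Sum>b\<in>I. cnj (v a) * A a b * w b)"

definition inner_on :: "'a set \<Rightarrow> ('a \<Rightarrow> complex) \<Rightarrow> ('a \<Rightarrow> complex) \<Rightarrow> complex" where
  "inner_on I v w = (\<Sum>a\<in>I. cnj (v a) * w a)"

lemma qform_eq_sesq_form: "qform I A v = sesq_form I A v v"
  unfolding qform_def sesq_form_def ..

lemma cnj_inner_on_commute: "inner_on I w v = cnj (inner_on I v w)"
  unfolding inner_on_def by (simp add: mult.commute)

lemma qform_diff:
  fixes \<alpha> \<beta> :: real and v w :: "'a \<Rightarrow> complex"
  shows "qform I A (\<lambda>a. \<alpha> * v a - \<beta> * w a) =
           \<alpha>\<^sup>2 * qform I A v + \<beta>\<^sup>2 * qform I A w - \<alpha> * \<beta> * (sesq_form I A v w + sesq_form I A w v)"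
  unfolding qform_def sesq_form_def
  by (simp add: sum_distrib_left sum.distrib[symmetric] sum_subtractf[symmetric] algebra_simps
      power2_eq_square)

lemma psd_op_sesq_form_le:
  fixes \<alpha> \<beta> :: real and v w :: "'a \<Rightarrow> complex"
  assumes "psd_op I A"
  shows "\<alpha> * \<beta> * Re (sesq_form I A v w + sesq_form I A w v)
           \<le> \<alpha>\<^sup>2 * Re (qform I A v) + \<beta>\<^sup>2 * Re (qform I A w)"
proof -
  have "Re (qform I A (\<lambda>a. \<alpha> * v a - \<beta> * w a)) \<ge> 0"
    using assms unfolding psd_op_def by blast
  then show ?thesis
    by (simp add: qform_diff)
qed

lemma is_povm_sum_sesq_form:
  assumes "finite I" "is_povm I Outs E"
  shows "(\<Sum>k\<in>Outs. sesq_form I (E k) v w) = inner_on I v w"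
proof -
  have "(\<Sum>k\<in>Outs. sesq_form I (E k) v w)
      = (\<Sum>a\<in>I. \<Sum>b\<in>I. cnj (v a) * (\<Sum>k\<in>Outs. E k a b) * w b)"
    unfolding sesq_form_def by (simp add: sum_distrib_left sum_distrib_right sum.swap[of _ Outs])
  also have "\<dots> = (\<Sum>a\<in>I. \<Sum>b\<in>I. if a = b then cnj (v a) * w b else 0)"
    using assms(2) unfolding is_povm_def by (intro sum.cong refl) auto
  also have "\<dots> = inner_on I v w"
    using assms(1) unfolding inner_on_def by simp
  finally show ?thesis .
qed

lemma is_povm_inner_on_le:
  assumes "finite I" "finite Outs" and povm: "is_povm I Outs E"
    and k: "k1 \<in> Outs" "k2 \<in> Outs" "k1 \<noteq> k2"
    and unit: "inner_on I v v = 1" "inner_on I w w = 1"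
    and success: "outcome_prob I E v k1 \<ge> p" "outcome_prob I E w k2 \<ge> p"
  shows "3 * Re (inner_on I v w) \<le> 9 - 8 * p"
proof -
  define a where "a = outcome_prob I E v"
  define b where "b = outcome_prob I E w"
  define S where "S k = Re (sesq_form I (E k) v w + sesq_form I (E k) w v)" for k
  have psd: "psd_op I (E k)" if "k \<in> Outs" for k
    using povm that unfolding is_povm_def by blast
  have b_nonneg: "b k \<ge> 0" if "k \<in> Outs" for k
    using psd[OF that] unfolding b_def outcome_prob_def psd_op_def by blast
  have total: "(\<Sum>k\<in>Outs. outcome_prob I E u k) = Re (inner_on I u u)" for u
    using is_povm_sum_sesq_form[OF assms(1) povm]
    unfolding outcome_prob_def qform_eq_sesq_form by (metis Re_sum)
  have sum_a: "sum a Outs = 1" and sum_b: "sum b Outs = 1"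
    using total unit unfolding a_def b_def by simp_all
  have sum_S: "sum S Outs = 2 * Re (inner_on I v w)"
    unfolding S_def Re_sum[symmetric] sum.distrib is_povm_sum_sesq_form[OF assms(1) povm]
    by (simp add: cnj_inner_on_commute[of I w v])
  have "b k1 + b k2 = sum b {k1, k2}"
    using k(3) by simp
  also have "\<dots> \<le> sum b Outs"
    using assms(2) k b_nonneg by (intro sum_mono2) auto
  finally have b_k1_k2: "b k1 + b k2 \<le> 1"
    using sum_b by simp
  \<comment> \<open>Weighting the positivity bound 1:3 at k1 and 3:1 elsewhere charges the cross terms
    to the small probabilities b k1 and a k, k \<noteq> k1.\<close>
  have at_k1: "3 * S k1 \<le> a k1 + 9 * b k1"
    using psd_op_sesq_form_le[OF psd[OF k(1)], of 1 3 v w]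
    unfolding S_def a_def b_def outcome_prob_def by simp
  have "3 * S k \<le> 9 * a k + b k" if "k \<in> Outs - {k1}" for k
    using psd_op_sesq_form_le[OF psd, of k 3 1 v w] that
    unfolding S_def a_def b_def outcome_prob_def by simp
  then have off_k1: "3 * sum S (Outs - {k1}) \<le> 9 * sum a (Outs - {k1}) + sum b (Outs - {k1})"
    by (auto simp: sum_distrib_left sum.distrib[symmetric] intro!: sum_mono)
  have split_k1: "sum f Outs = f k1 + sum f (Outs - {k1})" for f :: "'b \<Rightarrow> real"
    using assms(2) k(1) by (rule sum.remove)
  show ?thesis
    using split_k1[of a] split_k1[of b] split_k1[of S] sum_a sum_b sum_S at_k1 off_k1 success b_k1_k2
    unfolding a_def b_def by linarith
qed

lemma input_state_overlap:
  assumes "d > 0"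
  shows "(\<Sum>j\<in>{0..<d}. cnj (input_state d k1 i j) * input_state d k2 i j)
           = of_real (if (i = k1) = (i = k2) then 1 else 1 - 2 / real d)"
proof -
  have "cnj (input_state d k1 i j) * input_state d k2 i j
          = of_real (1 / real d) - (if j = 0 \<and> (i = k1) \<noteq> (i = k2) then of_real (2 / real d) else 0)"
    for j
    unfolding input_state_def using assms
    by (auto simp flip: of_real_mult simp: real_sqrt_mult[symmetric] of_real_diff[symmetric])
  then show ?thesis
    using assms by (simp add: sum_subtractf)
qed

lemma inner_on_joint_state:
  assumes "d > 0"
  shows "inner_on (joint_basis d m) (joint_state d m s k1) (joint_state d m s k2)
           = of_real (\<Prod>t<m. if (s t = k1) = (s t = k2) then 1 else 1 - 2 / real d)"
proof -
  have "inner_on (joint_basis d m) (joint_state d m s k1) (joint_state d m s k2)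
      = (\<Sum>js\<in>joint_basis d m.
           \<Prod>t<m. cnj (input_state d k1 (s t) (js ! t)) * input_state d k2 (s t) (js ! t))"
    unfolding inner_on_def joint_state_def by (simp add: prod.distrib)
  also have "\<dots> = (\<Prod>t<m. \<Sum>j\<in>{0..<d}. cnj (input_state d k1 (s t) j) * input_state d k2 (s t) j)"
    by (rule sum_prod_joint_basis)
  finally show ?thesis
    using assms by (simp add: input_state_overlap)
qed

lemma inner_on_joint_state_self:
  "d > 0 \<Longrightarrow> inner_on (joint_basis d m) (joint_state d m s k) (joint_state d m s k) = 1"
  by (simp add: inner_on_joint_state)

lemma Re_inner_on_joint_state_ge:
  assumes "d \<ge> 2"
  shows "Re (inner_on (joint_basis d m) (joint_state d m s k1) (joint_state d m s k2))
           \<ge> 1 - 2 * real m / real d"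
proof -
  have "1 - 2 * real m / real d = 1 + real m * (- (2 / real d))"
    by simp
  also have "\<dots> \<le> (1 + - (2 / real d)) ^ m"
    using assms by (intro Bernoulli_inequality) (simp add: field_simps)
  also have "\<dots> = (\<Prod>t<m. 1 - 2 / real d)"
    by simp
  also have "\<dots> \<le> (\<Prod>t<m. if (s t = k1) = (s t = k2) then 1 else 1 - 2 / real d)"
    using assms by (intro prod_mono) (auto simp: field_simps)
  finally show ?thesis
    using assms by (subst inner_on_joint_state) (auto simp del: of_real_prod)
qed

theorem proposition2:
  fixes C :: nat
  assumes "C \<ge> 2"
  shows "\<exists>c>0. \<forall>n\<ge>1. \<forall>m s E.
           solves_minus_sign_search C n m s E \<longrightarrow> real m \<ge> c * 2 ^ n"
proof (intro exI[of _ "1 / 5"] conjI allI impI)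
  fix n m s E
  assume "1 \<le> n" and solves: "solves_minus_sign_search C n m s E"
  define d :: nat where "d = 2 ^ n"
  have "d \<ge> 2"
    using power_increasing[OF \<open>1 \<le> n\<close>, of "2::nat"] unfolding d_def by simp
  have povm: "is_povm (joint_basis d m) {1..C} E"
    and success: "\<And>k. k \<in> {1..C} \<Longrightarrow>
                    outcome_prob (joint_basis d m) E (joint_state d m s k) k \<ge> 0.9"
    using solves unfolding solves_minus_sign_search_def d_def by auto
  let ?B = "joint_basis d m" and ?\<psi> = "joint_state d m s"
  have "3 * Re (inner_on ?B (?\<psi> 1) (?\<psi> 2)) \<le> 9 - 8 * 0.9"
    using assms \<open>d \<ge> 2\<close> success[of 1] success[of 2]
    by (intro is_povm_inner_on_le[of _ _ _ 1 2, OF finite_joint_basis _ povm])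
       (auto simp: inner_on_joint_state_self)
  moreover have "Re (inner_on ?B (?\<psi> 1) (?\<psi> 2)) \<ge> 1 - 2 * real m / real d"
    using \<open>d \<ge> 2\<close> by (rule Re_inner_on_joint_state_ge)
  ultimately have "1 - 2 * real m / real d \<le> 3 / 5"
    by linarith
  then have "real d \<le> 5 * real m"
    using \<open>d \<ge> 2\<close> by (simp add: field_simps)
  then show "1 / 5 * 2 ^ n \<le> real m"
    unfolding d_def by simp
qed simp

end
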